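(* Let $\xi(0),\xi(1),\xi(2),\dots$ be a sequence of vectors $\xi(k)=(\xi_1(k),\dots,\xi_d(k))\in\mathbb{R}^d$. For $\nu\geq 1$, $n\geq 1$ and $1\leq i_1,\dots,i_\nu\leq d$ define the iterated sum \[ \Sigma^{i_1,\dots,i_\nu}(n)=\sum_{0\leq k_1<\dots<k_\nu<n}\xi_{i_1}(k_1)\xi_{i_2}(k_2)\cdots\xi_{i_\nu}(k_\nu). \] Suppose that \[ \limsup_{n\to\infty} n^{-1}\sum_{k=0}^n|\xi(k)|=R<\infty \] and that the limit \[ \lim_{n\to\infty}n^{-1}\sum_{k=0}^n\xi(k)=Q=(Q_1,\dots,Q_d) \] exists with $|Q|<\infty$. Then for any $\nu\geq1$ and any $1\leq i_1,\dots,i_\nu\leq d$, \[ \lim_{n\to\infty}n^{-\nu}\Sigma^{i_1,\dots,i_\nu}(n)=\frac 1{\nu !}\prod_{j=1}^\nu Q_{i_j}. \]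
   Context: $|\cdot|$ denotes the Euclidean norm on $\mathbb{R}^d$. *)

theory Defs
  imports "HOL-Analysis.Analysis" "HOL-Library.Extended_Real"
begin

definition iter_sum :: "(nat \<Rightarrow> real ^ 'd) \<Rightarrow> 'd list \<Rightarrow> nat \<Rightarrow> real" where
  "iter_sum \<xi> is n =
     (\<Sum>ks \<in> {ks. length ks = length is \<and> sorted_wrt (<) ks \<and> (\<forall>k\<in>set ks. k < n)}.
        \<Prod>j<length is. \<xi> (ks ! j) $ (is ! j))"

end

theory Submission
  imports Defs "HOL-Library.Landau_Symbols"
begin

text \<open>
  Splitting off the last index gives
  \<open>iter_sum \<xi> (is @ [i]) n = (\<Sum>k<n. iter_sum \<xi> is k * \<xi> k $ i)\<close>, so by induction it
  suffices to show: if \<open>(\<Sum>k<n. a k) / n \<longlonglongrightarrow> q\<close>, \<open>(\<Sum>k<n. \<bar>a k\<bar>) = O(n)\<close> and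
  \<open>b k / k ^ m \<longlonglongrightarrow> \<beta>\<close>, then \<open>(\<Sum>k<n. b k * a k) / n ^ (m + 1) \<longlonglongrightarrow> \<beta> q / (m + 1)\<close>.
  Write \<open>b k = \<beta> k ^ m + o(k ^ m)\<close>: the error part contributes \<open>o(n ^ (m + 1))\<close> thanks to the
  \<open>O(n)\<close> bound, and in the main part summation by parts against the partial sums
  \<open>(\<Sum>k<n. a k) = q n + o(n)\<close> leaves \<open>q (\<Sum>k<n. k ^ m) \<sim> q n ^ (m + 1) / (m + 1)\<close>.
\<close>

lemma power_Suc_diff_bounds:
  fixes x :: real
  assumes "x \<ge> 0"
  shows "real (Suc m) * x ^ m \<le> (x + 1) ^ Suc m - x ^ Suc m"
    and "(x + 1) ^ Suc m - x ^ Suc m \<le> real (Suc m) * (x + 1) ^ m"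
proof -
  have diff: "(x + 1) ^ Suc m - x ^ Suc m = (\<Sum>i<Suc m. x ^ (m - i) * (x + 1) ^ i)"
    using power_diff_sumr2[of "x + 1" "Suc m" x] by simp
  have lower: "x ^ m \<le> x ^ (m - i) * (x + 1) ^ i" if "i < Suc m" for i
  proof -
    have "x ^ m = x ^ (m - i) * x ^ i"
      using that by (simp flip: power_add)
    also have "\<dots> \<le> x ^ (m - i) * (x + 1) ^ i"
      using assms by (intro mult_left_mono power_mono) auto
    finally show ?thesis .
  qed
  have upper: "x ^ (m - i) * (x + 1) ^ i \<le> (x + 1) ^ m" if "i < Suc m" for i
  proof -
    have "x ^ (m - i) * (x + 1) ^ i \<le> (x + 1) ^ (m - i) * (x + 1) ^ i"
      using assms by (intro mult_right_mono power_mono) auto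
    also have "\<dots> = (x + 1) ^ m"
      using that by (simp flip: power_add)
    finally show ?thesis .
  qed
  have "of_nat (card {..<Suc m}) * x ^ m \<le> (\<Sum>i<Suc m. x ^ (m - i) * (x + 1) ^ i)"
    by (rule sum_bounded_below) (use lower in auto)
  then show "real (Suc m) * x ^ m \<le> (x + 1) ^ Suc m - x ^ Suc m"
    unfolding diff by simp
  have "(\<Sum>i<Suc m. x ^ (m - i) * (x + 1) ^ i) \<le> of_nat (card {..<Suc m}) * (x + 1) ^ m"
    by (rule sum_bounded_above) (use upper in auto)
  then show "(x + 1) ^ Suc m - x ^ Suc m \<le> real (Suc m) * (x + 1) ^ m"
    unfolding diff by simp
qed

lemma sum_powers_bounds:
  shows "real (Suc m) * (\<Sum>k<n. real k ^ m) \<le> real n ^ Suc m"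
    and "real n ^ Suc m \<le> real (Suc m) * ((\<Sum>k<n. real k ^ m) + real n ^ m)"
proof -
  have telescope: "real n ^ Suc m = (\<Sum>k<n. real (Suc k) ^ Suc m - real k ^ Suc m)"
    by (subst sum_lessThan_telescope) simp
  show "real (Suc m) * (\<Sum>k<n. real k ^ m) \<le> real n ^ Suc m"
    unfolding telescope sum_distrib_left
    by (rule sum_mono) (use power_Suc_diff_bounds(1)[of "real k" m for k] in \<open>auto simp: add.commute\<close>)
  have "real n ^ Suc m \<le> real (Suc m) * (\<Sum>k<n. real (Suc k) ^ m)"
    unfolding telescope sum_distrib_left
    by (rule sum_mono) (use power_Suc_diff_bounds(2)[of "real k" m for k] in \<open>auto simp: add.commute\<close>)
  also have "(\<Sum>k<n. real (Suc k) ^ m) \<le> (\<Sum>k<n. real k ^ m) + real n ^ m"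
    by (induction n) simp_all
  finally show "real n ^ Suc m \<le> real (Suc m) * ((\<Sum>k<n. real k ^ m) + real n ^ m)"
    by simp
qed

lemma LIMSEQ_sum_powers:
  "(\<lambda>n. (\<Sum>k<n. real k ^ m) / real n ^ Suc m) \<longlonglongrightarrow> 1 / real (Suc m)"
proof (rule tendsto_sandwich)
  show "\<forall>\<^sub>F n in sequentially. 1 / real (Suc m) - 1 / real n \<le> (\<Sum>k<n. real k ^ m) / real n ^ Suc m"
    using eventually_gt_at_top[of 0]
  proof eventually_elim
    case (elim n)
    have "real n ^ Suc m / real (Suc m) - real n ^ m \<le> (\<Sum>k<n. real k ^ m)"
      using sum_powers_bounds(2)[of n m] by (simp add: field_simps)
    then have "(real n ^ Suc m / real (Suc m) - real n ^ m) / real n ^ Suc m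
        \<le> (\<Sum>k<n. real k ^ m) / real n ^ Suc m"
      using elim by (simp add: divide_right_mono)
    moreover have "(real n ^ Suc m / real (Suc m) - real n ^ m) / real n ^ Suc m
        = 1 / real (Suc m) - 1 / real n"
      using elim by (simp add: field_simps del: of_nat_Suc)
    ultimately show ?case by simp
  qed
  show "\<forall>\<^sub>F n in sequentially. (\<Sum>k<n. real k ^ m) / real n ^ Suc m \<le> 1 / real (Suc m)"
    using eventually_gt_at_top[of 0]
  proof eventually_elim
    case (elim n)
    then show ?case
      using sum_powers_bounds(1)[of m n] by (simp add: field_simps del: of_nat_Suc)
  qed
  show "(\<lambda>n. 1 / real (Suc m) - 1 / real n) \<longlonglongrightarrow> 1 / real (Suc m)"
    using tendsto_diff[OF tendsto_const lim_const_over_n[of 1]] by simp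
qed simp

lemma sum_mult_abs_le_split:
  fixes p s g :: "nat \<Rightarrow> real"
  assumes "mono g" "\<And>k. g k \<ge> 0" "\<delta> \<ge> 0"
    and small: "\<And>k. k \<ge> K \<Longrightarrow> \<bar>s k\<bar> \<le> \<delta> * g k" and "K \<le> n"
  shows "\<bar>\<Sum>k<n. p k * s k\<bar> \<le> (\<Sum>k<K. \<bar>p k * s k\<bar>) + \<delta> * g n * (\<Sum>k<n. \<bar>p k\<bar>)"
proof -
  have "\<bar>p k * s k\<bar> \<le> \<bar>p k\<bar> * (\<delta> * g n)" if "k \<in> {K..<n}" for k
  proof -
    have "\<bar>s k\<bar> \<le> \<delta> * g n"
      using that small[of k] mono_onD[OF \<open>mono g\<close>, of k n] \<open>\<delta> \<ge> 0\<close>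
      by (auto intro: order_trans mult_left_mono)
    then show ?thesis by (simp add: abs_mult mult_left_mono)
  qed
  then have "(\<Sum>k\<in>{K..<n}. \<bar>p k * s k\<bar>) \<le> (\<Sum>k\<in>{K..<n}. \<bar>p k\<bar> * (\<delta> * g n))"
    by (rule sum_mono)
  also have "\<dots> = \<delta> * g n * (\<Sum>k\<in>{K..<n}. \<bar>p k\<bar>)"
    by (simp add: sum_distrib_left mult_ac)
  also have "\<dots> \<le> \<delta> * g n * (\<Sum>k<n. \<bar>p k\<bar>)"
    using assms(2,3) by (intro mult_left_mono sum_mono2) auto
  finally have tail: "(\<Sum>k\<in>{K..<n}. \<bar>p k * s k\<bar>) \<le> \<delta> * g n * (\<Sum>k<n. \<bar>p k\<bar>)" .
  have "\<bar>\<Sum>k<n. p k * s k\<bar> \<le> (\<Sum>k<n. \<bar>p k * s k\<bar>)"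
    by (rule sum_abs)
  also have "\<dots> = (\<Sum>k<K. \<bar>p k * s k\<bar>) + (\<Sum>k\<in>{K..<n}. \<bar>p k * s k\<bar>)"
    using \<open>K \<le> n\<close> by (metis atLeast0LessThan sum.atLeastLessThan_concat zero_le)
  finally show ?thesis
    using tail by linarith
qed

lemma sum_mult_smallo:
  fixes p s g h :: "nat \<Rightarrow> real"
  assumes s: "s \<in> o(g)" and "mono g" "\<And>k. g k \<ge> 0"
    and p: "(\<lambda>n. \<Sum>k<n. \<bar>p k\<bar>) \<in> O(h)"
    and lim: "filterlim (\<lambda>n. g n * h n) at_top sequentially"
  shows "(\<lambda>n. \<Sum>k<n. p k * s k) \<in> o(\<lambda>n. g n * h n)"
proof (rule landau_o.smallI)
  fix \<epsilon> :: real
  assume "\<epsilon> > 0"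
  obtain c where "c > 0" and c: "\<forall>\<^sub>F n in sequentially. \<bar>\<Sum>k<n. \<bar>p k\<bar>\<bar> \<le> c * \<bar>h n\<bar>"
    using landau_o.bigE[OF p] by auto
  define \<delta> where "\<delta> = \<epsilon> / (2 * c)"
  have "\<delta> > 0"
    using \<open>\<epsilon> > 0\<close> \<open>c > 0\<close> by (simp add: \<delta>_def)
  then obtain K where K: "\<And>k. k \<ge> K \<Longrightarrow> \<bar>s k\<bar> \<le> \<delta> * g k"
    using landau_o.smallD[OF s] assms(3) by (fastforce simp: eventually_sequentially)
  define M where "M = (\<Sum>k<K. \<bar>p k * s k\<bar>)"
  have "\<forall>\<^sub>F n in sequentially. 2 * M / \<epsilon> \<le> g n * h n"
    using lim by (simp add: filterlim_at_top)
  then show "\<forall>\<^sub>F n in sequentially. norm (\<Sum>k<n. p k * s k) \<le> \<epsilon> * norm (g n * h n)"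
    using c eventually_ge_at_top[of K]
  proof eventually_elim
    case (elim n)
    have "\<bar>\<Sum>k<n. p k * s k\<bar> \<le> M + \<delta> * g n * (\<Sum>k<n. \<bar>p k\<bar>)"
      unfolding M_def using sum_mult_abs_le_split[OF assms(2,3) _ K] elim \<open>\<delta> > 0\<close> by simp
    also have "\<dots> \<le> M + \<delta> * g n * (c * \<bar>h n\<bar>)"
      using elim \<open>\<delta> > 0\<close> assms(3)[of n] by (auto intro!: mult_left_mono)
    also have "\<dots> = M + \<epsilon> / 2 * \<bar>g n * h n\<bar>"
      using \<open>c > 0\<close> assms(3)[of n] by (simp add: \<delta>_def abs_mult)
    also have "\<dots> \<le> \<epsilon> * \<bar>g n * h n\<bar>"
    proof -
      have "2 * M \<le> \<epsilon> * (g n * h n)"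
        using elim \<open>\<epsilon> > 0\<close> by (simp add: field_simps)
      also have "\<dots> \<le> \<epsilon> * \<bar>g n * h n\<bar>"
        using \<open>\<epsilon> > 0\<close> by (intro mult_left_mono) auto
      finally show ?thesis by linarith
    qed
    finally show ?case by simp
  qed
qed

lemma summation_by_parts:
  fixes w e :: "nat \<Rightarrow> 'a::comm_ring"
  shows "(\<Sum>k<n. w k * (e (Suc k) - e k))
    = w n * e n - w 0 * e 0 - (\<Sum>k<n. (w (Suc k) - w k) * e (Suc k))"
  by (induction n) (auto simp: algebra_simps)

lemma sum_power_weighted_by_parts:
  fixes a :: "nat \<Rightarrow> real" and q :: real
  defines "e \<equiv> \<lambda>n. (\<Sum>k<n. a k) - q * real n"
  shows "(\<Sum>k<n. real k ^ m * a k) = q * (\<Sum>k<n. real k ^ m) + real n ^ m * e n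
    - (\<Sum>k<n. (real (Suc k) ^ m - real k ^ m) * e (Suc k))"
proof -
  have "real k ^ m * a k = q * real k ^ m + real k ^ m * (e (Suc k) - e k)" for k
    by (simp add: e_def algebra_simps)
  then have "(\<Sum>k<n. real k ^ m * a k)
      = q * (\<Sum>k<n. real k ^ m) + (\<Sum>k<n. real k ^ m * (e (Suc k) - e k))"
    by (simp add: sum.distrib sum_distrib_left)
  with summation_by_parts[of "\<lambda>k. real k ^ m" e n] show ?thesis
    by (simp add: e_def)
qed

lemma sum_power_increments_smallo:
  fixes e :: "nat \<Rightarrow> real"
  assumes "e \<in> o(\<lambda>n. real n)"
  shows "(\<lambda>n. \<Sum>k<n. (real (Suc k) ^ m - real k ^ m) * e (Suc k)) \<in> o(\<lambda>n. real n * real n ^ m)"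
proof -
  have "(\<lambda>k. e (Suc k)) \<in> o(\<lambda>k. real (Suc k))"
    using landau_o.small.compose[OF assms filterlim_Suc] by simp
  also have "(\<lambda>k. real (Suc k)) \<in> O(\<lambda>k. real k)"
    by (intro bigoI[of _ 2] eventually_mono[OF eventually_gt_at_top[of 0]]) auto
  finally show ?thesis
  proof (rule sum_mult_smallo)
    show "mono (\<lambda>k. real k)" by (auto intro: monoI)
    show "(\<lambda>n. \<Sum>k<n. \<bar>real (Suc k) ^ m - real k ^ m\<bar>) \<in> O(\<lambda>n. real n ^ m)"
    proof (intro bigoI[of _ 1] always_eventually allI)
      fix n
      have "(\<Sum>k<n. \<bar>real (Suc k) ^ m - real k ^ m\<bar>) = (\<Sum>k<n. real (Suc k) ^ m - real k ^ m)"
        by (simp add: power_mono)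
      also have "\<dots> = real n ^ m - real 0 ^ m"
        by (rule sum_lessThan_telescope)
      finally show "norm (\<Sum>k<n. \<bar>real (Suc k) ^ m - real k ^ m\<bar>) \<le> 1 * norm (real n ^ m)"
        by (cases m) auto
    qed
    show "filterlim (\<lambda>n. real n * real n ^ m) at_top sequentially"
      using filterlim_pow_at_top[OF zero_less_Suc filterlim_real_sequentially] by simp
  qed simp
qed

lemma Cesaro_power_weighted:
  fixes a :: "nat \<Rightarrow> real"
  assumes mean: "(\<lambda>n. (\<Sum>k<n. a k) / real n) \<longlonglongrightarrow> q"
  shows "(\<lambda>n. (\<Sum>k<n. real k ^ m * a k) / real n ^ Suc m) \<longlonglongrightarrow> q / real (Suc m)"
proof -
  define e where "e n = (\<Sum>k<n. a k) - q * real n" for n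
  define D where "D n = (\<Sum>k<n. (real (Suc k) ^ m - real k ^ m) * e (Suc k))" for n
  have e_over_n: "(\<lambda>n. e n / real n) \<longlonglongrightarrow> 0"
  proof -
    have "(\<lambda>n. (\<Sum>k<n. a k) / real n - q) \<longlonglongrightarrow> 0"
      using tendsto_diff[OF mean tendsto_const[of q]] by simp
    moreover have "\<forall>\<^sub>F n in sequentially. (\<Sum>k<n. a k) / real n - q = e n / real n"
      using eventually_gt_at_top[of 0] by eventually_elim (simp add: e_def field_simps)
    ultimately show ?thesis
      by (rule Lim_transform_eventually)
  qed
  have "D \<in> o(\<lambda>n. real n * real n ^ m)"
    unfolding D_def by (rule sum_power_increments_smallo[OF smalloI_tendsto[OF e_over_n]]) simp
  then have "(\<lambda>n. D n / real n ^ Suc m) \<longlonglongrightarrow> 0"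
    using smalloD_tendsto by simp
  then have "(\<lambda>n. q * ((\<Sum>k<n. real k ^ m) / real n ^ Suc m) + e n / real n - D n / real n ^ Suc m)
      \<longlonglongrightarrow> q * (1 / real (Suc m)) + 0 - 0"
    by (intro tendsto_intros LIMSEQ_sum_powers e_over_n)
  moreover have "\<forall>\<^sub>F n in sequentially.
      q * ((\<Sum>k<n. real k ^ m) / real n ^ Suc m) + e n / real n - D n / real n ^ Suc m
        = (\<Sum>k<n. real k ^ m * a k) / real n ^ Suc m"
  proof (rule eventually_mono[OF eventually_gt_at_top[of 0]])
    fix n :: nat
    assume "n > 0"
    have "(\<Sum>k<n. real k ^ m * a k) = q * (\<Sum>k<n. real k ^ m) + real n ^ m * e n - D n"
      using sum_power_weighted_by_parts[where a=a and q=q and m=m and n=n] by (simp add: e_def D_def)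
    then show "q * ((\<Sum>k<n. real k ^ m) / real n ^ Suc m) + e n / real n - D n / real n ^ Suc m
        = (\<Sum>k<n. real k ^ m * a k) / real n ^ Suc m"
      using \<open>n > 0\<close> by (simp add: add_divide_distrib diff_divide_distrib)
  qed
  ultimately show ?thesis
    by (simp add: Lim_transform_eventually)
qed

lemma Cesaro_weighted:
  fixes a b :: "nat \<Rightarrow> real"
  assumes mean: "(\<lambda>n. (\<Sum>k<n. a k) / real n) \<longlonglongrightarrow> q"
    and bounded: "(\<lambda>n. \<Sum>k<n. \<bar>a k\<bar>) \<in> O(\<lambda>n. real n)"
    and weight: "(\<lambda>k. b k / real k ^ m) \<longlonglongrightarrow> \<beta>"
  shows "(\<lambda>n. (\<Sum>k<n. b k * a k) / real n ^ Suc m) \<longlonglongrightarrow> \<beta> * q / real (Suc m)"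
proof -
  define r where "r k = b k - \<beta> * real k ^ m" for k
  have "r \<in> o(\<lambda>k. real k ^ m)"
  proof (rule smalloI_tendsto)
    have "(\<lambda>k. b k / real k ^ m - \<beta>) \<longlonglongrightarrow> 0"
      using tendsto_diff[OF weight tendsto_const[of \<beta>]] by simp
    moreover have "\<forall>\<^sub>F k in sequentially. b k / real k ^ m - \<beta> = r k / real k ^ m"
      using eventually_gt_at_top[of 0] by eventually_elim (simp add: r_def field_simps)
    ultimately show "(\<lambda>k. r k / real k ^ m) \<longlonglongrightarrow> 0"
      by (rule Lim_transform_eventually)
    show "\<forall>\<^sub>F k in sequentially. real k ^ m \<noteq> 0"
      using eventually_gt_at_top[of 0] by eventually_elim simp
  qed
  then have "(\<lambda>n. \<Sum>k<n. a k * r k) \<in> o(\<lambda>n. real n ^ m * real n)"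
  proof (rule sum_mult_smallo[where p=a, OF _ _ _ bounded])
    show "mono (\<lambda>k. real k ^ m)" by (auto intro!: monoI power_mono)
    show "filterlim (\<lambda>n. real n ^ m * real n) at_top sequentially"
      using filterlim_pow_at_top[OF zero_less_Suc filterlim_real_sequentially]
      by (simp add: mult.commute)
  qed simp
  then have "(\<lambda>n. (\<Sum>k<n. a k * r k) / real n ^ Suc m) \<longlonglongrightarrow> 0"
    using smalloD_tendsto by (simp add: mult.commute)
  then have "(\<lambda>n. \<beta> * ((\<Sum>k<n. real k ^ m * a k) / real n ^ Suc m)
      + (\<Sum>k<n. a k * r k) / real n ^ Suc m) \<longlonglongrightarrow> \<beta> * (q / real (Suc m)) + 0"
    by (intro tendsto_intros Cesaro_power_weighted[OF mean])
  moreover have "(\<Sum>k<n. b k * a k) = \<beta> * (\<Sum>k<n. real k ^ m * a k) + (\<Sum>k<n. a k * r k)" for n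
    by (simp add: r_def algebra_simps sum.distrib sum_distrib_left sum_subtractf)
  ultimately show ?thesis
    by (simp add: add_divide_distrib)
qed

definition increasing_lists :: "nat \<Rightarrow> nat \<Rightarrow> nat list set" where
  "increasing_lists l n = {ks. length ks = l \<and> sorted_wrt (<) ks \<and> (\<forall>k\<in>set ks. k < n)}"

lemma finite_increasing_lists: "finite (increasing_lists l n)"
proof (rule finite_subset)
  show "increasing_lists l n \<subseteq> {ks. set ks \<subseteq> {..<n} \<and> length ks = l}"
    unfolding increasing_lists_def by auto
qed (simp add: finite_lists_length_eq)

lemma increasing_lists_0: "increasing_lists 0 n = {[]}"
  by (auto simp: increasing_lists_def)

lemma increasing_lists_Suc_0: "increasing_lists (Suc l) 0 = {}"
  by (auto simp: increasing_lists_def length_Suc_conv)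

lemma increasing_lists_Suc:
  "increasing_lists (Suc l) (Suc n)
    = increasing_lists (Suc l) n \<union> (\<lambda>ks. ks @ [n]) ` increasing_lists l n"
proof
  show "increasing_lists (Suc l) (Suc n)
      \<subseteq> increasing_lists (Suc l) n \<union> (\<lambda>ks. ks @ [n]) ` increasing_lists l n"
  proof
    fix ks
    assume ks: "ks \<in> increasing_lists (Suc l) (Suc n)"
    then have "ks \<noteq> []"
      by (auto simp: increasing_lists_def)
    then obtain ys y where ks_eq: "ks = ys @ [y]"
      by (metis rev_exhaust)
    with ks have "ys \<in> increasing_lists l n" if "y = n"
      using that by (auto simp: increasing_lists_def sorted_wrt_append)
    moreover from ks ks_eq have "ks \<in> increasing_lists (Suc l) n" if "y \<noteq> n"
      using that by (auto simp: increasing_lists_def sorted_wrt_append less_Suc_eq)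
    ultimately show "ks \<in> increasing_lists (Suc l) n \<union> (\<lambda>ks. ks @ [n]) ` increasing_lists l n"
      using ks_eq by blast
  qed
qed (auto simp: increasing_lists_def sorted_wrt_append less_Suc_eq)

lemma iter_sum_increasing_lists:
  "iter_sum \<xi> is n = (\<Sum>ks\<in>increasing_lists (length is) n. \<Prod>j<length is. \<xi> (ks ! j) $ (is ! j))"
  unfolding iter_sum_def increasing_lists_def ..

lemma iter_sum_Nil: "iter_sum \<xi> [] n = 1"
  by (simp add: iter_sum_increasing_lists increasing_lists_0)

lemma iter_sum_snoc: "iter_sum \<xi> (is @ [i]) n = (\<Sum>k<n. iter_sum \<xi> is k * \<xi> k $ i)"
proof (induction n)
  case 0
  then show ?case
    by (simp add: iter_sum_increasing_lists increasing_lists_Suc_0)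
next
  case (Suc n)
  define l where "l = length is"
  define f where "f ks = (\<Prod>j<Suc l. \<xi> (ks ! j) $ ((is @ [i]) ! j))" for ks
  have f_snoc: "f (ks @ [n]) = (\<Prod>j<l. \<xi> (ks ! j) $ (is ! j)) * \<xi> n $ i"
    if "ks \<in> increasing_lists l n" for ks
    using that by (auto simp: f_def l_def increasing_lists_def nth_append intro!: prod.cong)
  have "iter_sum \<xi> (is @ [i]) (Suc n) = (\<Sum>ks\<in>increasing_lists (Suc l) (Suc n). f ks)"
    by (simp add: iter_sum_increasing_lists f_def l_def)
  also have "\<dots> = (\<Sum>ks\<in>increasing_lists (Suc l) n. f ks)
      + (\<Sum>ks\<in>(\<lambda>ks. ks @ [n]) ` increasing_lists l n. f ks)"
    unfolding increasing_lists_Suc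
    by (rule sum.union_disjoint) (auto simp: finite_increasing_lists, auto simp: increasing_lists_def)
  also have "(\<Sum>ks\<in>increasing_lists (Suc l) n. f ks) = iter_sum \<xi> (is @ [i]) n"
    by (simp add: iter_sum_increasing_lists f_def l_def)
  also have "(\<Sum>ks\<in>(\<lambda>ks. ks @ [n]) ` increasing_lists l n. f ks) = iter_sum \<xi> is n * \<xi> n $ i"
    by (subst sum.reindex) (auto simp: inj_on_def f_snoc iter_sum_increasing_lists l_def sum_distrib_right)
  finally show ?case
    using Suc.IH by simp
qed

lemma sum_norm_bigo_of_limsup:
  fixes x :: "nat \<Rightarrow> 'a::real_normed_vector"
  assumes "limsup (\<lambda>n. ereal ((\<Sum>k=0..n. norm (x k)) / real n)) < \<infinity>"
  shows "(\<lambda>n. \<Sum>k<n. norm (x k)) \<in> O(\<lambda>n. real n)"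
proof -
  obtain B :: nat where "limsup (\<lambda>n. ereal ((\<Sum>k=0..n. norm (x k)) / real n)) < ereal (real B)"
    using assms less_PInf_Ex_of_nat by auto
  then have "\<forall>\<^sub>F n in sequentially. (\<Sum>k=0..n. norm (x k)) / real n < real B"
    by (auto dest: Limsup_lessD elim: eventually_mono)
  then have "\<forall>\<^sub>F n in sequentially. norm (\<Sum>k<n. norm (x k)) \<le> real B * norm (real n)"
    using eventually_gt_at_top[of 0]
  proof eventually_elim
    case (elim n)
    have "(\<Sum>k<n. norm (x k)) \<le> (\<Sum>k=0..n. norm (x k))"
      by (rule sum_mono2) auto
    also have "\<dots> \<le> real B * real n"
      using elim by (simp add: divide_less_eq)
    finally show ?case
      by (simp add: sum_nonneg)
  qed
  then show ?thesis
    by (rule bigoI)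
qed

lemma Cesaro_mean_lessThan:
  fixes x :: "nat \<Rightarrow> 'a::real_normed_vector"
  assumes "(\<lambda>n. (1 / real n) *\<^sub>R (\<Sum>k=0..n. x k)) \<longlonglongrightarrow> L"
  shows "(\<lambda>n. (1 / real n) *\<^sub>R (\<Sum>k<n. x k)) \<longlonglongrightarrow> L"
proof (rule LIMSEQ_imp_Suc)
  have "(\<lambda>n. (real n / real (Suc n)) *\<^sub>R ((1 / real n) *\<^sub>R (\<Sum>k=0..n. x k))) \<longlonglongrightarrow> 1 *\<^sub>R L"
    by (intro tendsto_scaleR LIMSEQ_n_over_Suc_n assms)
  moreover have "\<forall>\<^sub>F n in sequentially.
      (real n / real (Suc n)) *\<^sub>R ((1 / real n) *\<^sub>R (\<Sum>k=0..n. x k))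
        = (1 / real (Suc n)) *\<^sub>R (\<Sum>k<Suc n. x k)"
    using eventually_gt_at_top[of 0]
    by eventually_elim (simp add: atLeast0AtMost lessThan_Suc_atMost)
  ultimately show "(\<lambda>n. (1 / real (Suc n)) *\<^sub>R (\<Sum>k<Suc n. x k)) \<longlonglongrightarrow> L"
    by (simp add: Lim_transform_eventually)
qed

theorem theorem2p1:
  fixes \<xi> :: "nat \<Rightarrow> real ^ 'd" and Q :: "real ^ 'd" and "is" :: "'d list"
  assumes "limsup (\<lambda>n. ereal ((\<Sum>k=0..n. norm (\<xi> k)) / real n)) < \<infinity>"
    and "(\<lambda>n. (1 / real n) *\<^sub>R (\<Sum>k=0..n. \<xi> k)) \<longlonglongrightarrow> Q"
    and "length is \<ge> 1"
  shows "(\<lambda>n. iter_sum \<xi> is n / real n ^ length is)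
           \<longlonglongrightarrow> (1 / fact (length is)) * (\<Prod>j<length is. Q $ (is ! j))"
proof -
  have bounded: "(\<lambda>n. \<Sum>k<n. \<bar>\<xi> k $ i\<bar>) \<in> O(\<lambda>n. real n)" for i
  proof (rule landau_o.big_trans[OF _ sum_norm_bigo_of_limsup[OF assms(1)]])
    show "(\<lambda>n. \<Sum>k<n. \<bar>\<xi> k $ i\<bar>) \<in> O(\<lambda>n. \<Sum>k<n. norm (\<xi> k))"
      by (intro landau_o.big_mono always_eventually allI)
        (simp add: sum_mono component_le_norm_cart sum_nonneg)
  qed
  have mean: "(\<lambda>n. (\<Sum>k<n. \<xi> k $ i) / real n) \<longlonglongrightarrow> Q $ i" for i
    using tendsto_vec_nth[OF Cesaro_mean_lessThan[OF assms(2)], of i]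
    by (simp add: sum_component)
  have "(\<lambda>n. iter_sum \<xi> js n / real n ^ length js)
      \<longlonglongrightarrow> (1 / fact (length js)) * (\<Prod>j<length js. Q $ (js ! j))" for js
  proof (induction js rule: rev_induct)
    case Nil
    then show ?case by (simp add: iter_sum_Nil)
  next
    case (snoc i js)
    have "(\<Prod>j<length js. Q $ ((js @ [i]) ! j)) = (\<Prod>j<length js. Q $ (js ! j))"
      by (rule prod.cong) (auto simp: nth_append)
    then show ?case
      using Cesaro_weighted[OF mean bounded snoc.IH, of i] by (simp add: iter_sum_snoc mult_ac)
  qed
  then show ?thesis .
qed

end
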